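(* Fix $d\ge1$, $N\ge1$, $\alpha\ge2$, powers $P_s,P_r>0$, gains $\xi_{u,v}>0$, and positions $\mathbf{s},\mathbf{1},\dots,\mathbf{N}\in\mathbb{R}^d$ with $\mathbf{s}\neq\mathbf{j}$ for all $j$. For a relay position $\mathbf{r}\in\mathbb{R}^d$ let $\mathsf{SNR}_{u,v}=\xi_{u,v}P_u/\|\mathbf{u}-\mathbf{v}\|^{\alpha}$ for $(u,v)\in\{(s,r),(s,j),(r,j)\}$ (an SNR being $+\infty$ when the distance is $0$). With $\mathsf{C}(x)=\tfrac12\log(1+x)$, $f_j(\rho,\mathbf{r})=\mathsf{SNR}_{s,j}+\mathsf{SNR}_{r,j}+2\rho\sqrt{\mathsf{SNR}_{s,j}\mathsf{SNR}_{r,j}}$, $g^*_j(\rho,\mathbf{r})=(1-\rho^2)\mathsf{SNR}_{s,r}$, $$R_{DF}(\rho,\mathbf{r})=\min_{1\le j\le N}\min\big(\mathsf{C}(f_j(\rho,\mathbf{r})),\mathsf{C}(g^*_j(\rho,\mathbf{r}))\big),\qquad R_{DF}(\mathbf{r})=\max_{\rho\in[0,1]}R_{DF}(\rho,\mathbf{r}),$$ the map $(t,\mathbf{r})\mapsto R_{DF}(\sqrt t,\mathbf{r})$ is quasi-concave on $[0,1]\times\mathbb{R}^d$ (i.e., $R_{DF}(\rho,\mathbf{r})$ is quasi-concave in $(\rho^2,\mathbf{r})$), and $R_{DF}(\mathbf{r})$ is quasi-concave in $\mathbf{r}\in\mathbb{R}^d$.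
   Context: Setting: real AWGN multicast relay channel (decode-forward rate) with source $s$, relay at position $\mathbf{r}$, destinations $1,\dots,N$, path-loss exponent $\alpha$ and channel gains $a_{u,v}=\sqrt{\xi_{u,v}}/\|\mathbf{u}-\mathbf{v}\|^{\alpha/2}$; $\rho$ is the source–relay input correlation coefficient. A function $F$ (possibly taking value $+\infty$) on a convex set is quasi-concave if $F(\lambda x_1+(1-\lambda)x_2)\ge\min(F(x_1),F(x_2))$ for all $x_1,x_2$ and $\lambda\in[0,1]$. *)

theory Defs
  imports "HOL-Analysis.Analysis" "HOL-Library.Extended_Real"
begin

definition quasiconcave_on :: "'a::real_vector set \<Rightarrow> ('a \<Rightarrow> ereal) \<Rightarrow> bool" where
  "quasiconcave_on S F \<longleftrightarrow>
     (\<forall>x\<in>S. \<forall>y\<in>S. \<forall>l\<in>{0..1::real}.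
        F (l *\<^sub>R x + (1 - l) *\<^sub>R y) \<ge> min (F x) (F y))"

definition SNR :: "real \<Rightarrow> real \<Rightarrow> real \<Rightarrow> 'd::real_normed_vector \<Rightarrow> 'd \<Rightarrow> ereal" where
  "SNR alpha xi P u v = (if u = v then \<infinity> else ereal (xi * P / (norm (u - v) powr alpha)))"

definition esqrt :: "ereal \<Rightarrow> ereal" where
  "esqrt x = (if x = \<infinity> then \<infinity> else ereal (sqrt (real_of_ereal x)))"

definition Ccap :: "ereal \<Rightarrow> ereal" where
  "Ccap x = (if x = \<infinity> then \<infinity> else ereal (ln (1 + real_of_ereal x) / 2))"

text \<open>f_j(rho, r); s = source position, pos j = position of destination j.\<close>
definition f_j :: "real \<Rightarrow> real \<Rightarrow> real \<Rightarrow> (nat \<Rightarrow> real) \<Rightarrow> (nat \<Rightarrow> real)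
    \<Rightarrow> 'd::real_normed_vector \<Rightarrow> (nat \<Rightarrow> 'd) \<Rightarrow> nat \<Rightarrow> real \<Rightarrow> 'd \<Rightarrow> ereal" where
  "f_j alpha Ps Pr xi_sj xi_rj s pos j rho r =
     (let a = SNR alpha (xi_sj j) Ps s (pos j); b = SNR alpha (xi_rj j) Pr r (pos j)
      in a + b + ereal (2 * rho) * esqrt (a * b))"

definition g_star :: "real \<Rightarrow> real \<Rightarrow> real \<Rightarrow> 'd::real_normed_vector \<Rightarrow> real \<Rightarrow> 'd \<Rightarrow> ereal" where
  "g_star alpha Ps xi_sr s rho r = ereal (1 - rho\<^sup>2) * SNR alpha xi_sr Ps s r"

definition R_DF_rho :: "real \<Rightarrow> nat \<Rightarrow> real \<Rightarrow> real \<Rightarrow> real \<Rightarrow> (nat \<Rightarrow> real) \<Rightarrow> (nat \<Rightarrow> real)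
    \<Rightarrow> 'd::real_normed_vector \<Rightarrow> (nat \<Rightarrow> 'd) \<Rightarrow> real \<Rightarrow> 'd \<Rightarrow> ereal" where
  "R_DF_rho alpha N Ps Pr xi_sr xi_sj xi_rj s pos rho r =
     Min ((\<lambda>j. min (Ccap (f_j alpha Ps Pr xi_sj xi_rj s pos j rho r))
                    (Ccap (g_star alpha Ps xi_sr s rho r))) ` {1..N})"

definition R_DF :: "real \<Rightarrow> nat \<Rightarrow> real \<Rightarrow> real \<Rightarrow> real \<Rightarrow> (nat \<Rightarrow> real) \<Rightarrow> (nat \<Rightarrow> real)
    \<Rightarrow> 'd::real_normed_vector \<Rightarrow> (nat \<Rightarrow> 'd) \<Rightarrow> 'd \<Rightarrow> ereal" where
  "R_DF alpha N Ps Pr xi_sr xi_sj xi_rj s pos r =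
     (SUP rho\<in>{0..1}. R_DF_rho alpha N Ps Pr xi_sr xi_sj xi_rj s pos rho r)"

end

theory Submission
  imports Defs
begin

text \<open>With t = \<rho>^2, every term of the rate is the nondecreasing map C applied to a link
  quantity, so it suffices that the superlevel sets of f_j and g*_j are convex in (t, r).
  For g*_j = (1 - t) \<xi> P / \<parallel>r - s\<parallel>^\<alpha> the superlevel set is
  {c \<parallel>r - s\<parallel>^\<alpha> \<le> (1 - t) \<xi> P}, a sublevel set of a convex function.
  For f_j write a = SNR_{s,j} and u = \<surd>SNR_{r,j}, so f_j = a + u^2 + 2 \<surd>(a t) u;
  rationalising \<surd>(c - a + a t) - \<surd>(a t) turns f_j \<ge> c into
  (c - a) \<parallel>r - j\<parallel>^(\<alpha>/2) \<le> \<surd>(\<xi> P) (\<surd>(c - a + a t) + \<surd>(a t)),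
  whose left side is convex in r (as \<alpha>/2 \<ge> 1) and whose right side is concave in t.
  Minima preserve quasi-concavity, and maximising a jointly quasi-concave function over the
  convex range of t leaves a quasi-concave function of r.\<close>

lemma quasiconcave_onI_superlevel:
  assumes "\<And>x y l c. x \<in> S \<Longrightarrow> y \<in> S \<Longrightarrow> l \<in> {0..1} \<Longrightarrow> ereal c \<le> F x \<Longrightarrow> ereal c \<le> F y
             \<Longrightarrow> ereal c \<le> F (l *\<^sub>R x + (1 - l) *\<^sub>R y)"
  shows "quasiconcave_on S F"
  unfolding quasiconcave_on_def
proof (intro ballI)
  fix x y l assume xyl: "x \<in> S" "y \<in> S" "l \<in> {0..1::real}"
  show "min (F x) (F y) \<le> F (l *\<^sub>R x + (1 - l) *\<^sub>R y)"
  proof (rule ccontr)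
    assume "\<not> ?thesis"
    then obtain c where c: "F (l *\<^sub>R x + (1 - l) *\<^sub>R y) < ereal c" "ereal c < min (F x) (F y)"
      using ereal_dense2 by (meson not_le)
    then have "ereal c \<le> F x" "ereal c \<le> F y"
      by auto
    with xyl have "ereal c \<le> F (l *\<^sub>R x + (1 - l) *\<^sub>R y)"
      by (rule assms)
    with c(1) show False by simp
  qed
qed

lemma quasiconcave_onD:
  "quasiconcave_on S F \<Longrightarrow> x \<in> S \<Longrightarrow> y \<in> S \<Longrightarrow> 0 \<le> l \<Longrightarrow> l \<le> 1
    \<Longrightarrow> min (F x) (F y) \<le> F (l *\<^sub>R x + (1 - l) *\<^sub>R y)"
  unfolding quasiconcave_on_def by simp

lemma quasiconcave_on_eq:
  assumes "quasiconcave_on S F" "convex S" "\<And>x. x \<in> S \<Longrightarrow> F x = G x"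
  shows "quasiconcave_on S G"
  unfolding quasiconcave_on_def
proof (intro ballI)
  fix x y l assume xyl: "x \<in> S" "y \<in> S" "l \<in> {0..1::real}"
  then have "l *\<^sub>R x + (1 - l) *\<^sub>R y \<in> S"
    using \<open>convex S\<close> by (simp add: convex_def)
  with xyl quasiconcave_onD[OF assms(1), of x y l]
  show "min (G x) (G y) \<le> G (l *\<^sub>R x + (1 - l) *\<^sub>R y)"
    by (simp add: assms(3))
qed

lemma quasiconcave_on_subset:
  "quasiconcave_on T F \<Longrightarrow> S \<subseteq> T \<Longrightarrow> quasiconcave_on S F"
  unfolding quasiconcave_on_def by blast

lemma quasiconcave_on_min:
  assumes "quasiconcave_on S F" "quasiconcave_on S G"
  shows "quasiconcave_on S (\<lambda>x. min (F x) (G x))"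
  unfolding quasiconcave_on_def
proof (intro ballI)
  fix x y l assume xyl: "x \<in> S" "y \<in> S" "l \<in> {0..1::real}"
  have "min (min (F x) (G x)) (min (F y) (G y)) = min (min (F x) (F y)) (min (G x) (G y))"
    by (simp add: min.assoc min.left_commute min.commute)
  also have "\<dots> \<le> min (F (l *\<^sub>R x + (1 - l) *\<^sub>R y)) (G (l *\<^sub>R x + (1 - l) *\<^sub>R y))"
    using xyl by (intro min.mono quasiconcave_onD[OF assms(1)] quasiconcave_onD[OF assms(2)]) auto
  finally show "min (min (F x) (G x)) (min (F y) (G y))
      \<le> min (F (l *\<^sub>R x + (1 - l) *\<^sub>R y)) (G (l *\<^sub>R x + (1 - l) *\<^sub>R y))" .
qed

lemma quasiconcave_on_Min:
  assumes "finite J" "J \<noteq> {}" "\<And>j. j \<in> J \<Longrightarrow> quasiconcave_on S (F j)"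
  shows "quasiconcave_on S (\<lambda>x. Min ((\<lambda>j. F j x) ` J))"
  unfolding quasiconcave_on_def
proof (intro ballI)
  fix x y l assume xyl: "x \<in> S" "y \<in> S" "l \<in> {0..1::real}"
  have "Min ((\<lambda>j. F j (l *\<^sub>R x + (1 - l) *\<^sub>R y)) ` J) \<in> (\<lambda>j. F j (l *\<^sub>R x + (1 - l) *\<^sub>R y)) ` J"
    using assms(1,2) by (intro Min_in) auto
  then obtain k where k: "k \<in> J" "Min ((\<lambda>j. F j (l *\<^sub>R x + (1 - l) *\<^sub>R y)) ` J) = F k (l *\<^sub>R x + (1 - l) *\<^sub>R y)"
    by auto
  have "min (Min ((\<lambda>j. F j x) ` J)) (Min ((\<lambda>j. F j y) ` J)) \<le> min (F k x) (F k y)"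
    using k assms(1) by (intro min.mono Min_le) auto
  also have "\<dots> \<le> F k (l *\<^sub>R x + (1 - l) *\<^sub>R y)"
    using xyl by (intro quasiconcave_onD[OF assms(3)[OF k(1)]]) auto
  finally show "min (Min ((\<lambda>j. F j x) ` J)) (Min ((\<lambda>j. F j y) ` J))
      \<le> Min ((\<lambda>j. F j (l *\<^sub>R x + (1 - l) *\<^sub>R y)) ` J)"
    using k(2) by simp
qed

lemma quasiconcave_on_mono_comp:
  assumes "quasiconcave_on S F" "convex S" "F ` S \<subseteq> A" "mono_on A h"
  shows "quasiconcave_on S (\<lambda>x. h (F x))"
  unfolding quasiconcave_on_def
proof (intro ballI)
  fix x y l assume xyl: "x \<in> S" "y \<in> S" "l \<in> {0..1::real}"
  then have "l *\<^sub>R x + (1 - l) *\<^sub>R y \<in> S"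
    using \<open>convex S\<close> by (simp add: convex_def)
  have "min (h (F x)) (h (F y)) \<le> h (min (F x) (F y))"
    by (auto simp: min_def)
  also have "\<dots> \<le> h (F (l *\<^sub>R x + (1 - l) *\<^sub>R y))"
  proof (rule mono_onD[OF \<open>mono_on A h\<close>])
    show "min (F x) (F y) \<in> A" "F (l *\<^sub>R x + (1 - l) *\<^sub>R y) \<in> A"
      using assms(3) xyl \<open>l *\<^sub>R x + (1 - l) *\<^sub>R y \<in> S\<close> by (auto simp: min_def)
    show "min (F x) (F y) \<le> F (l *\<^sub>R x + (1 - l) *\<^sub>R y)"
      using xyl by (intro quasiconcave_onD[OF assms(1)]) auto
  qed
  finally show "min (h (F x)) (h (F y)) \<le> h (F (l *\<^sub>R x + (1 - l) *\<^sub>R y))" .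
qed

lemma quasiconcave_on_partial_SUP:
  fixes G :: "'a::real_vector \<Rightarrow> 'b::real_vector \<Rightarrow> ereal"
  assumes "quasiconcave_on (T \<times> S) (\<lambda>(t, r). G t r)" "convex T"
  shows "quasiconcave_on S (\<lambda>r. SUP t\<in>T. G t r)"
  unfolding quasiconcave_on_def
proof (intro ballI)
  fix x y l assume xyl: "x \<in> S" "y \<in> S" "l \<in> {0..1::real}"
  let ?z = "l *\<^sub>R x + (1 - l) *\<^sub>R y"
  show "min (SUP t\<in>T. G t x) (SUP t\<in>T. G t y) \<le> (SUP t\<in>T. G t ?z)"
  proof (rule ccontr)
    assume "\<not> ?thesis"
    then have "(SUP t\<in>T. G t ?z) < (SUP t\<in>T. G t x) \<and> (SUP t\<in>T. G t ?z) < (SUP t\<in>T. G t y)"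
      by (simp add: not_le)
    then obtain t1 t2 where t: "t1 \<in> T" "t2 \<in> T"
      "(SUP t\<in>T. G t ?z) < G t1 x" "(SUP t\<in>T. G t ?z) < G t2 y"
      by (auto simp: less_SUP_iff)
    have "l *\<^sub>R t1 + (1 - l) *\<^sub>R t2 \<in> T"
      using \<open>convex T\<close> t xyl by (simp add: convex_def)
    moreover have "min (G t1 x) (G t2 y)
        \<le> (\<lambda>(t, r). G t r) (l *\<^sub>R (t1, x) + (1 - l) *\<^sub>R (t2, y))"
      using quasiconcave_onD[OF assms(1), of "(t1, x)" "(t2, y)" l] t xyl by simp
    ultimately have "min (G t1 x) (G t2 y) \<le> (SUP t\<in>T. G t ?z)"
      by (auto intro: order_trans SUP_upper)
    with t(3,4) show False by (simp add: min_def split: if_splits)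
  qed
qed

lemma quasiconcave_on_prodI_superlevel:
  fixes F :: "real \<Rightarrow> 'a::real_vector \<Rightarrow> ereal"
  assumes "\<And>t1 t2 r1 r2 l c. t1 \<in> T \<Longrightarrow> t2 \<in> T \<Longrightarrow> r1 \<in> S \<Longrightarrow> r2 \<in> S \<Longrightarrow> 0 \<le> l \<Longrightarrow> l \<le> 1
      \<Longrightarrow> ereal c \<le> F t1 r1 \<Longrightarrow> ereal c \<le> F t2 r2
      \<Longrightarrow> ereal c \<le> F (l * t1 + (1 - l) * t2) (l *\<^sub>R r1 + (1 - l) *\<^sub>R r2)"
  shows "quasiconcave_on (T \<times> S) (\<lambda>(t, r). F t r)"
proof (rule quasiconcave_onI_superlevel)
  fix x y l c assume xy: "x \<in> T \<times> S" "y \<in> T \<times> S" and l: "l \<in> {0..1::real}"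
    and c: "ereal c \<le> (\<lambda>(t, r). F t r) x" "ereal c \<le> (\<lambda>(t, r). F t r) y"
  obtain t1 r1 t2 r2 where "x = (t1, r1)" "y = (t2, r2)"
    by fastforce
  with xy l c assms[of t1 t2 r1 r2 l c]
  show "ereal c \<le> (\<lambda>(t, r). F t r) (l *\<^sub>R x + (1 - l) *\<^sub>R y)"
    by simp
qed

lemma concave_on_sqrt: "concave_on {0..} sqrt"
  unfolding concave_on_iff
proof (intro conjI convex_real_interval ballI allI impI)
  fix x y u v :: real
  assume xy: "x \<in> {0..}" "y \<in> {0..}" and uv: "0 \<le> u" "0 \<le> v" "u + v = 1"
  have am_gm: "2 * (sqrt x * sqrt y) \<le> x + y"
    using xy sum_squares_bound[of "sqrt x" "sqrt y"] by simp
  have "(u * sqrt x + v * sqrt y)\<^sup>2 = u * u * x + v * v * y + u * v * (2 * (sqrt x * sqrt y))"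
    using xy by (simp add: power2_eq_square algebra_simps)
  also have "\<dots> \<le> u * u * x + v * v * y + u * v * (x + y)"
    using am_gm uv by (intro add_left_mono mult_left_mono) auto
  also have "\<dots> = u * (u + v) * x + v * (u + v) * y"
    by (simp add: algebra_simps)
  also have "\<dots> = u * x + v * y"
    using uv by simp
  finally show "u * sqrt x + v * sqrt y \<le> sqrt (u *\<^sub>R x + v *\<^sub>R y)"
    by (simp add: real_le_rsqrt)
qed

lemma convex_on_powr_nonneg:
  assumes "1 \<le> p"
  shows "convex_on {0..} (\<lambda>x::real. x powr p)"
  unfolding convex_on_def
proof (intro conjI convex_real_interval ballI allI impI)
  fix x y u v :: real
  assume xy: "x \<in> {0..}" "y \<in> {0..}" and uv: "0 \<le> u" "0 \<le> v" "u + v = 1"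
  have scale: "(w * z) powr p \<le> w * z powr p" if "0 \<le> w" "w \<le> 1" "0 \<le> z" for w z :: real
  proof -
    have "w powr p \<le> w powr 1"
      using that assms by (intro powr_mono') auto
    then show ?thesis
      using that by (auto simp: powr_mult intro: mult_right_mono)
  qed
  consider "x > 0" "y > 0" | "x = 0" | "y = 0"
    using xy by fastforce
  then show "(u *\<^sub>R x + v *\<^sub>R y) powr p \<le> u * x powr p + v * y powr p"
  proof cases
    case 1
    have "u = 1 - v"
      using uv by simp
    with convex_onD[OF powr_convex[OF assms], of v x y] 1 uv show ?thesis
      by simp
  next
    case 2
    then show ?thesis using scale[of v y] uv xy by simp
  next
    case 3
    then show ?thesis using scale[of u x] uv xy by simp
  qed
qed

lemma convex_on_norm_diff_powr:
  fixes q :: "'a::real_normed_vector"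
  assumes "1 \<le> p"
  shows "convex_on UNIV (\<lambda>r. norm (r - q) powr p)"
  unfolding convex_on_def
proof (intro conjI convex_UNIV ballI allI impI)
  fix x y :: 'a and u v :: real
  assume uv: "0 \<le> u" "0 \<le> v" "u + v = 1"
  have u: "u = 1 - v"
    using uv by simp
  have "dist q (u *\<^sub>R x + v *\<^sub>R y) \<le> u * dist q x + v * dist q y"
    unfolding u using uv by (intro convex_onD[OF convex_on_dist[OF convex_UNIV]]) auto
  then have "norm (u *\<^sub>R x + v *\<^sub>R y - q) \<le> u * norm (x - q) + v * norm (y - q)"
    by (simp add: dist_norm norm_minus_commute)
  then have "norm (u *\<^sub>R x + v *\<^sub>R y - q) powr p \<le> (u * norm (x - q) + v * norm (y - q)) powr p"
    using assms by (intro powr_mono2) auto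
  also have "\<dots> \<le> u * norm (x - q) powr p + v * norm (y - q) powr p"
    using convex_onD[OF convex_on_powr_nonneg[OF assms], of v "norm (x - q)" "norm (y - q)"] uv
    by (simp add: u)
  finally show "norm (u *\<^sub>R x + v *\<^sub>R y - q) powr p \<le> u * norm (x - q) powr p + v * norm (y - q) powr p" .
qed

text \<open>Multiplying by \<surd>(c - a + w^2) + w rationalises \<surd>(c - a + w^2) - w and isolates u.\<close>

lemma le_completed_square_iff:
  fixes a c u w :: real
  assumes "0 \<le> u" "0 \<le> w"
  shows "c \<le> a + u\<^sup>2 + 2 * w * u \<longleftrightarrow> c \<le> a \<or> c - a \<le> u * (sqrt (c - a + w\<^sup>2) + w)"
proof (cases "c \<le> a")
  case True
  then show ?thesis
    using assms by (simp add: add_increasing2)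
next
  case False
  define S where "S = sqrt (c - a + w\<^sup>2)"
  have S2: "S\<^sup>2 = c - a + w\<^sup>2"
    using False by (simp add: S_def add_pos_nonneg)
  have S: "0 < S"
    using False by (simp add: S_def add_pos_nonneg)
  have "(u + w)\<^sup>2 = u\<^sup>2 + w\<^sup>2 + 2 * w * u"
    by (simp add: power2_sum mult.commute)
  then have "c \<le> a + u\<^sup>2 + 2 * w * u \<longleftrightarrow> S\<^sup>2 \<le> (u + w)\<^sup>2"
    using S2 by linarith
  also have "\<dots> \<longleftrightarrow> S \<le> u + w"
    using S assms by (simp add: abs_le_square_iff[symmetric])
  also have "\<dots> \<longleftrightarrow> (S - w) * (S + w) \<le> u * (S + w)"
    using S assms by (simp add: mult_le_cancel_right) linarith
  also have "(S - w) * (S + w) = c - a"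
    using S2 by (simp add: power2_eq_square algebra_simps)
  finally show ?thesis
    using False by (simp add: S_def)
qed

lemma relay_sum_superlevel_iff:
  fixes r p :: "'a::real_normed_vector"
  assumes a: "0 < a" and K: "0 < xi * P" and t: "0 \<le> t"
  shows "ereal c \<le> ereal a + SNR alpha xi P r p + ereal (2 * sqrt t) * esqrt (ereal a * SNR alpha xi P r p)
    \<longleftrightarrow> c \<le> a \<or> (c - a) * norm (r - p) powr (alpha / 2) \<le> sqrt (xi * P) * (sqrt (c - a + a * t) + sqrt (a * t))"
proof (cases "r = p")
  case True
  have "ereal (2 * sqrt t) * \<infinity> \<ge> 0"
    using t by simp
  moreover have "c \<le> a \<or> 0 \<le> sqrt (xi * P) * (sqrt (c - a + a * t) + sqrt (a * t))"
    using a t K by (cases "c \<le> a") (auto intro!: mult_nonneg_nonneg[OF real_sqrt_ge_zero])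
  ultimately show ?thesis
    using True a by (auto simp: SNR_def esqrt_def add_increasing)
next
  case False
  define D where "D = norm (r - p) powr (alpha / 2)"
  have D: "0 < D"
    using False by (simp add: D_def)
  have D2: "norm (r - p) powr alpha = D\<^sup>2"
    using False by (simp add: D_def power2_eq_square flip: powr_add)
  define u where "u = sqrt (xi * P) / D"
  have u: "0 \<le> u"
    using D K by (simp add: u_def)
  have SNR: "SNR alpha xi P r p = ereal (u\<^sup>2)"
    using False D K by (simp add: SNR_def D2 u_def power_divide)
  have "sqrt t * sqrt (a * u\<^sup>2) = sqrt (a * t) * u"
    using u by (simp add: real_sqrt_mult)
  then have "ereal c \<le> ereal a + SNR alpha xi P r p + ereal (2 * sqrt t) * esqrt (ereal a * SNR alpha xi P r p)
      \<longleftrightarrow> c \<le> a + u\<^sup>2 + 2 * sqrt (a * t) * u"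
    by (simp add: SNR esqrt_def mult.assoc)
  also have "\<dots> \<longleftrightarrow> c \<le> a \<or> c - a \<le> u * (sqrt (c - a + a * t) + sqrt (a * t))"
    using le_completed_square_iff[OF u, of "sqrt (a * t)" c a] a t by simp
  also have "c - a \<le> u * (sqrt (c - a + a * t) + sqrt (a * t))
      \<longleftrightarrow> (c - a) * D \<le> sqrt (xi * P) * (sqrt (c - a + a * t) + sqrt (a * t))"
    using D by (simp add: u_def pos_le_divide_eq)
  finally show ?thesis
    by (simp add: D_def)
qed

lemma relay_sum_nonneg:
  fixes r p :: "'a::real_normed_vector"
  assumes "0 < a" "0 < xi * P" "0 \<le> t"
  shows "0 \<le> ereal a + SNR alpha xi P r p + ereal (2 * sqrt t) * esqrt (ereal a * SNR alpha xi P r p)"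
  using relay_sum_superlevel_iff[OF assms, of 0] assms(1) by (simp add: zero_ereal_def)

lemma quasiconcave_on_relay_sum:
  fixes p :: "'a::real_normed_vector"
  assumes a: "0 < a" and K: "0 < xi * P" and alpha: "2 \<le> alpha"
  shows "quasiconcave_on ({0..} \<times> UNIV) (\<lambda>(t, r).
           ereal a + SNR alpha xi P r p + ereal (2 * sqrt t) * esqrt (ereal a * SNR alpha xi P r p))"
proof (rule quasiconcave_on_prodI_superlevel)
  fix t1 t2 :: real and r1 r2 :: 'a and l c :: real
  assume t: "t1 \<in> {0..}" "t2 \<in> {0..}" and l: "0 \<le> l" "l \<le> 1"
  define D where "D = (\<lambda>r. norm (r - p) powr (alpha / 2))"
  define B where "B = (\<lambda>t. sqrt (xi * P) * (sqrt (c - a + a * t) + sqrt (a * t)))"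
  have level: "ereal c \<le> ereal a + SNR alpha xi P r p + ereal (2 * sqrt t) * esqrt (ereal a * SNR alpha xi P r p)
      \<longleftrightarrow> c \<le> a \<or> (c - a) * D r \<le> B t" if "0 \<le> t" for t r
    unfolding D_def B_def by (rule relay_sum_superlevel_iff[OF a K that])
  assume "ereal c \<le> ereal a + SNR alpha xi P r1 p + ereal (2 * sqrt t1) * esqrt (ereal a * SNR alpha xi P r1 p)"
    and "ereal c \<le> ereal a + SNR alpha xi P r2 p + ereal (2 * sqrt t2) * esqrt (ereal a * SNR alpha xi P r2 p)"
  then have le: "c \<le> a \<or> (c - a) * D r1 \<le> B t1" "c \<le> a \<or> (c - a) * D r2 \<le> B t2"
    using level t by auto
  let ?t = "l * t1 + (1 - l) * t2" and ?r = "l *\<^sub>R r1 + (1 - l) *\<^sub>R r2"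
  have "c \<le> a \<or> (c - a) * D ?r \<le> B ?t"
  proof (cases "c \<le> a")
    case False
    then have ca: "0 < c - a" by simp
    have "D ?r \<le> l * D r1 + (1 - l) * D r2"
      using convex_onD[OF convex_on_norm_diff_powr[of "alpha / 2" p], of "1 - l" r1 r2] alpha l
      by (simp add: D_def)
    then have "(c - a) * D ?r \<le> (c - a) * (l * D r1 + (1 - l) * D r2)"
      using ca by (simp add: mult_left_mono)
    also have "\<dots> = l * ((c - a) * D r1) + (1 - l) * ((c - a) * D r2)"
      by (simp add: algebra_simps)
    also have "\<dots> \<le> l * B t1 + (1 - l) * B t2"
      using le ca l by (intro add_mono mult_left_mono) auto
    also have "\<dots> = sqrt (xi * P) * ((l * sqrt (c - a + a * t1) + (1 - l) * sqrt (c - a + a * t2))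
        + (l * sqrt (a * t1) + (1 - l) * sqrt (a * t2)))"
      by (simp add: B_def algebra_simps)
    also have "\<dots> \<le> B ?t"
    proof -
      have sqrt_comb: "l * sqrt X + (1 - l) * sqrt Y \<le> sqrt (l * X + (1 - l) * Y)" if "0 \<le> X" "0 \<le> Y" for X Y
        using concave_onD[OF concave_on_sqrt, of "1 - l" X Y] that l by simp
      have "l * (c - a + a * t1) + (1 - l) * (c - a + a * t2) = c - a + a * ?t"
        "l * (a * t1) + (1 - l) * (a * t2) = a * ?t"
        by (simp_all add: algebra_simps)
      then have "l * sqrt (c - a + a * t1) + (1 - l) * sqrt (c - a + a * t2) \<le> sqrt (c - a + a * ?t)"
        "l * sqrt (a * t1) + (1 - l) * sqrt (a * t2) \<le> sqrt (a * ?t)"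
        using sqrt_comb[of "c - a + a * t1" "c - a + a * t2"] sqrt_comb[of "a * t1" "a * t2"] ca a t
        by (simp_all add: add_nonneg_nonneg)
      then show ?thesis
        unfolding B_def using K by (intro mult_left_mono add_mono) auto
    qed
    finally show ?thesis by simp
  qed simp
  moreover have "0 \<le> ?t"
    using t l by simp
  ultimately show "ereal c \<le> ereal a + SNR alpha xi P ?r p + ereal (2 * sqrt ?t) * esqrt (ereal a * SNR alpha xi P ?r p)"
    using level by blast
qed

text \<open>The condition t < 1 is needed because for r = s and t = 1 the product is 0 \<cdot> \<infinity> = 0.\<close>

lemma scaled_SNR_superlevel_iff:
  fixes r s :: "'a::real_normed_vector"
  assumes K: "0 < xi * P" and t: "t \<le> 1"
  shows "ereal c \<le> ereal (1 - t) * SNR alpha xi P s r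
    \<longleftrightarrow> c \<le> 0 \<or> (t < 1 \<and> c * norm (r - s) powr alpha \<le> (1 - t) * (xi * P))"
proof (cases "r = s")
  case True
  then show ?thesis
    using t mult_nonneg_nonneg[of "1 - t" "xi * P"] K by (auto simp: SNR_def)
next
  case False
  then have d: "0 < norm (r - s) powr alpha"
    by simp
  have "ereal (1 - t) * SNR alpha xi P s r = ereal ((1 - t) * (xi * P) / norm (r - s) powr alpha)"
    using False by (simp add: SNR_def norm_minus_commute)
  moreover have "c * norm (r - s) powr alpha \<le> 0 \<longleftrightarrow> c \<le> 0"
    using d by (simp add: mult_le_0_iff)
  moreover have "c \<le> 0 \<Longrightarrow> c * norm (r - s) powr alpha \<le> (1 - t) * (xi * P)"
    using d K t by (smt (verit) mult_nonneg_nonneg mult_nonpos_nonneg)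
  ultimately show ?thesis
    using d t by (cases "t = 1") (auto simp: pos_le_divide_eq)
qed

lemma scaled_SNR_nonneg:
  assumes "0 < xi * P" "t \<le> 1"
  shows "0 \<le> ereal (1 - t) * SNR alpha xi P s r"
  using scaled_SNR_superlevel_iff[OF assms, of 0] by (simp add: zero_ereal_def)

lemma quasiconcave_on_scaled_SNR:
  fixes s :: "'a::real_normed_vector"
  assumes K: "0 < xi * P" and alpha: "1 \<le> alpha"
  shows "quasiconcave_on ({..1} \<times> UNIV) (\<lambda>(t, r). ereal (1 - t) * SNR alpha xi P s r)"
proof (rule quasiconcave_on_prodI_superlevel)
  fix t1 t2 :: real and r1 r2 :: 'a and l c :: real
  assume t: "t1 \<in> {..1}" "t2 \<in> {..1}" and l: "0 \<le> l" "l \<le> 1"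
    and "ereal c \<le> ereal (1 - t1) * SNR alpha xi P s r1" "ereal c \<le> ereal (1 - t2) * SNR alpha xi P s r2"
  then have le: "c \<le> 0 \<or> (t1 < 1 \<and> c * norm (r1 - s) powr alpha \<le> (1 - t1) * (xi * P))"
    "c \<le> 0 \<or> (t2 < 1 \<and> c * norm (r2 - s) powr alpha \<le> (1 - t2) * (xi * P))"
    using scaled_SNR_superlevel_iff[OF K, of t1 c alpha s r1] scaled_SNR_superlevel_iff[OF K, of t2 c alpha s r2]
    by simp_all
  let ?t = "l * t1 + (1 - l) * t2" and ?r = "l *\<^sub>R r1 + (1 - l) *\<^sub>R r2"
  have "c \<le> 0 \<or> (?t < 1 \<and> c * norm (?r - s) powr alpha \<le> (1 - ?t) * (xi * P))"
  proof (cases "c \<le> 0")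
    case False
    then have t_lt: "?t < 1"
      using le l by (intro convex_bound_lt) auto
    have "c * norm (?r - s) powr alpha \<le> c * (l * norm (r1 - s) powr alpha + (1 - l) * norm (r2 - s) powr alpha)"
      using convex_onD[OF convex_on_norm_diff_powr[OF alpha, of s], of "1 - l" r1 r2] l False
      by (simp add: mult_left_mono)
    also have "\<dots> = l * (c * norm (r1 - s) powr alpha) + (1 - l) * (c * norm (r2 - s) powr alpha)"
      by (simp add: algebra_simps)
    also have "\<dots> \<le> l * ((1 - t1) * (xi * P)) + (1 - l) * ((1 - t2) * (xi * P))"
      using le l False by (intro add_mono mult_left_mono) auto
    also have "\<dots> = (1 - ?t) * (xi * P)"
      by (simp add: algebra_simps)
    finally show ?thesis
      using t_lt by simp
  qed simp
  moreover have "?t \<le> 1"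
    using t l by (intro convex_bound_le) auto
  ultimately show "ereal c \<le> ereal (1 - ?t) * SNR alpha xi P s ?r"
    using scaled_SNR_superlevel_iff[OF K, of ?t c alpha s ?r] by blast
qed

lemma mono_on_Ccap: "mono_on {0..} Ccap"
proof (rule mono_onI)
  fix X Y :: ereal
  assume "X \<in> {0..}" "Y \<in> {0..}" "X \<le> Y"
  then show "Ccap X \<le> Ccap Y"
    by (cases X; cases Y) (auto simp: Ccap_def)
qed

lemma sqrt_image_unit_interval: "sqrt ` {0..1} = {0..1::real}"
proof
  show "{0..1} \<subseteq> sqrt ` {0..1}"
  proof
    fix x :: real assume "x \<in> {0..1}"
    then show "x \<in> sqrt ` {0..1}"
      by (intro image_eqI[of _ _ "x\<^sup>2"]) (auto simp: power_le_one)
  qed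
qed auto

lemma quasiconcave_on_Ccap_f_j:
  fixes s :: "'a::real_normed_vector"
  assumes alpha: "2 \<le> alpha" and "0 < Ps" "0 < Pr" "0 < xi_sj j" "0 < xi_rj j" and "s \<noteq> pos j"
  shows "quasiconcave_on ({0..1} \<times> UNIV)
           (\<lambda>p. Ccap (f_j alpha Ps Pr xi_sj xi_rj s pos j (sqrt (fst p)) (snd p)))"
proof -
  define a where "a = xi_sj j * Ps / norm (s - pos j) powr alpha"
  have a: "0 < a" and K: "0 < xi_rj j * Pr"
    using assms by (simp_all add: a_def)
  have "f_j alpha Ps Pr xi_sj xi_rj s pos j (sqrt t) r = ereal a + SNR alpha (xi_rj j) Pr r (pos j)
      + ereal (2 * sqrt t) * esqrt (ereal a * SNR alpha (xi_rj j) Pr r (pos j))" for t r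
    using \<open>s \<noteq> pos j\<close> by (simp add: f_j_def SNR_def a_def Let_def)
  moreover have "quasiconcave_on ({0..1} \<times> UNIV) (\<lambda>p. Ccap (ereal a + SNR alpha (xi_rj j) Pr (snd p) (pos j)
      + ereal (2 * sqrt (fst p)) * esqrt (ereal a * SNR alpha (xi_rj j) Pr (snd p) (pos j))))"
    using quasiconcave_on_relay_sum[OF a K alpha, of "pos j"] relay_sum_nonneg[OF a K]
    by (intro quasiconcave_on_mono_comp[OF _ _ _ mono_on_Ccap])
      (auto simp: case_prod_beta' convex_Times elim!: quasiconcave_on_subset)
  ultimately show ?thesis
    by simp
qed

lemma quasiconcave_on_Ccap_g_star:
  fixes s :: "'a::real_normed_vector"
  assumes "1 \<le> alpha" "0 < Ps" "0 < xi_sr"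
  shows "quasiconcave_on ({0..1} \<times> UNIV) (\<lambda>p. Ccap (g_star alpha Ps xi_sr s (sqrt (fst p)) (snd p)))"
proof -
  have K: "0 < xi_sr * Ps"
    using assms by simp
  have "quasiconcave_on ({0..1} \<times> UNIV) (\<lambda>p. Ccap (ereal (1 - fst p) * SNR alpha xi_sr Ps s (snd p)))"
    using quasiconcave_on_scaled_SNR[OF K assms(1), of s] scaled_SNR_nonneg[OF K]
    by (intro quasiconcave_on_mono_comp[OF _ _ _ mono_on_Ccap])
      (auto simp: case_prod_beta' convex_Times elim!: quasiconcave_on_subset)
  then show ?thesis
    by (rule quasiconcave_on_eq) (auto simp: g_star_def convex_Times)
qed

lemma R_DF_eq_SUP_sqrt:
  "R_DF alpha N Ps Pr xi_sr xi_sj xi_rj s pos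
    = (\<lambda>r. SUP t\<in>{0..1}. R_DF_rho alpha N Ps Pr xi_sr xi_sj xi_rj s pos (sqrt t) r)"
proof -
  let ?R = "R_DF_rho alpha N Ps Pr xi_sr xi_sj xi_rj s pos"
  have "R_DF alpha N Ps Pr xi_sr xi_sj xi_rj s pos = (\<lambda>r. SUP \<rho>\<in>sqrt ` {0..1}. ?R \<rho> r)"
    by (intro ext) (simp only: R_DF_def sqrt_image_unit_interval)
  then show ?thesis
    by (simp add: image_image)
qed

theorem theorem5:
  fixes alpha Ps Pr xi_sr :: real and N :: nat
    and xi_sj xi_rj :: "nat \<Rightarrow> real"
    and s :: "real ^ 'd" and pos :: "nat \<Rightarrow> real ^ 'd"
  assumes "N \<ge> 1" and "alpha \<ge> 2" and "Ps > 0" and "Pr > 0" and "xi_sr > 0"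
    and "\<And>j. j \<in> {1..N} \<Longrightarrow> xi_sj j > 0"
    and "\<And>j. j \<in> {1..N} \<Longrightarrow> xi_rj j > 0"
    and "\<And>j. j \<in> {1..N} \<Longrightarrow> s \<noteq> pos j"
  shows "quasiconcave_on ({0..1} \<times> UNIV)
           (\<lambda>(t, r). R_DF_rho alpha N Ps Pr xi_sr xi_sj xi_rj s pos (sqrt t) r)
       \<and> quasiconcave_on UNIV (R_DF alpha N Ps Pr xi_sr xi_sj xi_rj s pos)"
proof -
  let ?R = "R_DF_rho alpha N Ps Pr xi_sr xi_sj xi_rj s pos"
  have "quasiconcave_on ({0..1} \<times> UNIV) (\<lambda>p. min
      (Ccap (f_j alpha Ps Pr xi_sj xi_rj s pos j (sqrt (fst p)) (snd p)))
      (Ccap (g_star alpha Ps xi_sr s (sqrt (fst p)) (snd p))))" if "j \<in> {1..N}" for j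
    using assms that
    by (intro quasiconcave_on_min quasiconcave_on_Ccap_f_j quasiconcave_on_Ccap_g_star) simp_all
  then have "quasiconcave_on ({0..1} \<times> UNIV) (\<lambda>(t, r). ?R (sqrt t) r)"
    unfolding R_DF_rho_def case_prod_beta' using \<open>N \<ge> 1\<close>
    by (intro quasiconcave_on_Min) auto
  with quasiconcave_on_partial_SUP[OF this] show ?thesis
    by (simp add: R_DF_eq_SUP_sqrt)
qed

end
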